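(* There exists a $2$-isometry $T\in B(\ell^2)$ such that for every $\lambda\in(0,1)$ and every $m\ge2$, the $\lambda$-Aluthge transform $\Delta_\lambda(T)$ is not an $m$-isometry. (For instance, the weighted shift with weights $a_j=\sqrt{(j+1)/j}$, $j\ge1$.)
   Context: $\ell^2$ has canonical basis $(e_j)_{j\ge1}$; the weighted shift associated to a bounded complex sequence $(a_j)_{j\ge1}$ is the operator $T\in B(\ell^2)$ with $Te_j=a_je_{j+1}$. For $T\in B(H)$ with polar decomposition $T=V|T|$ ($|T|=(T^*T)^{1/2}$, $V$ the partial isometry with $\ker V=\ker T$) and $\lambda\in[0,1]$, the $\lambda$-Aluthge transform is $\Delta_\lambda(T)=|T|^\lambda V|T|^{1-\lambda}$. For $m\ge1$, $T$ is an $m$-isometry if $\sum_{k=0}^m(-1)^k\binom{m}{k}\|T^kx\|^2=0$ for all $x\in H$. *)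

theory Defs
  imports "HOL-Analysis.Analysis" "HOL-Computational_Algebra.Polynomial"
begin

text \<open>The complex Hilbert space ell^2 = ell^2(N), N = {0,1,2,...}, realised as the set of
  square-summable sequences nat => complex (index j >= 1 of the paper corresponds to j - 1).\<close>

type_synonym seq = "nat \<Rightarrow> complex"
type_synonym op = "seq \<Rightarrow> seq"

definition L2 :: "seq set" where
  "L2 = {x. summable (\<lambda>n. (cmod (x n))\<^sup>2)}"

definition l2norm :: "seq \<Rightarrow> real" where
  "l2norm x = sqrt (\<Sum>n. (cmod (x n))\<^sup>2)"

definition l2inner :: "seq \<Rightarrow> seq \<Rightarrow> complex" where
  "l2inner x y = (\<Sum>n. x n * cnj (y n))"

text \<open>Bounded linear operators on ell^2 (B(ell^2)); normalised to be 0 outside L2 so that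
  an operator is determined by its action on ell^2.\<close>
definition is_bop :: "op \<Rightarrow> bool" where
  "is_bop T \<longleftrightarrow>
     (\<forall>x. x \<notin> L2 \<longrightarrow> T x = (\<lambda>n. 0)) \<and>
     (\<forall>x\<in>L2. T x \<in> L2) \<and>
     (\<forall>x\<in>L2. \<forall>y\<in>L2. \<forall>a b. T (\<lambda>n. a * x n + b * y n) = (\<lambda>n. a * T x n + b * T y n)) \<and>
     (\<exists>C. \<forall>x\<in>L2. l2norm (T x) \<le> C * l2norm x)"

definition op_norm :: "op \<Rightarrow> real" where
  "op_norm A = Sup ((\<lambda>x. l2norm (A x)) ` {x \<in> L2. l2norm x \<le> 1})"

definition adj :: "op \<Rightarrow> op" where
  "adj T = (THE S. is_bop S \<and> (\<forall>x\<in>L2. \<forall>y\<in>L2. l2inner (T x) y = l2inner x (S y)))"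

definition poly_op :: "real poly \<Rightarrow> op \<Rightarrow> op" where
  "poly_op p A = (\<lambda>x n. (\<Sum>i\<le>degree p. complex_of_real (coeff p i) * (A ^^ i) x n))"

text \<open>Continuous functional calculus for the power t powr r of a positive operator A
  (spectrum contained in [0, norm A]): A^r is the norm limit of p_k(A) for every sequence of
  real polynomials p_k converging uniformly to t powr r on [0, norm A].\<close>
definition op_pow :: "real \<Rightarrow> op \<Rightarrow> op" where
  "op_pow r A = (THE B. is_bop B \<and>
     (\<forall>p :: nat \<Rightarrow> real poly.
        uniform_limit {0..op_norm A} (\<lambda>k t. poly (p k) t) (\<lambda>t. t powr r) sequentially \<longrightarrow>
        (\<lambda>k. op_norm (\<lambda>x n. poly_op (p k) A x n - B x n)) \<longlonglongrightarrow> 0))"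

definition abs_op :: "op \<Rightarrow> op" where
  "abs_op T = op_pow (1/2) (adj T \<circ> T)"

definition polar_V :: "op \<Rightarrow> op" where
  "polar_V T = (THE V. is_bop V \<and> (\<forall>x\<in>L2. V (abs_op T x) = T x) \<and>
                        (\<forall>x\<in>L2. T x = (\<lambda>n. 0) \<longrightarrow> V x = (\<lambda>n. 0)))"

definition aluthge :: "real \<Rightarrow> op \<Rightarrow> op" where
  "aluthge l T = op_pow l (abs_op T) \<circ> polar_V T \<circ> op_pow (1 - l) (abs_op T)"

definition m_isometry :: "nat \<Rightarrow> op \<Rightarrow> bool" where
  "m_isometry m T \<longleftrightarrow>
     (\<forall>x\<in>L2. (\<Sum>k\<le>m. (-1) ^ k * real (m choose k) * (l2norm ((T ^^ k) x))\<^sup>2) = 0)"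

end

theory Submission
  imports Defs
begin

text \<open>A weighted shift with positive weights w is an m-isometry iff its moment sequence \<mu>,
  given by \<mu> (n+1) / \<mu> n = (w n)^2, satisfies (-\<Delta>)^m \<mu> = 0, i.e. \<mu> is a polynomial
  of degree < m. For the weights a_n the moments are n + 1, so T is a 2-isometry.
  The \<lambda>-Aluthge transform of a weighted shift is the weighted shift with weights
  w_n^(1-\<lambda>) w_(n+1)^\<lambda>; for T its moments are (n+1)^(1-\<lambda>) (n+2)^\<lambda> = n + 1 + \<lambda> + o(1).
  A polynomial sequence of the form n + 1 + \<lambda> + o(1) equals n + 1 + \<lambda>, which these moments
  are not (already at n = 0, 1, 2).\<close>

lemma L2_zero [simp]: "(\<lambda>n. 0) \<in> L2"
  by (simp add: L2_def)

lemma l2norm_zero [simp]: "l2norm (\<lambda>n. 0) = 0"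
  by (simp add: l2norm_def)

lemma l2norm_nonneg: "x \<in> L2 \<Longrightarrow> 0 \<le> l2norm x"
  by (simp add: l2norm_def suminf_nonneg L2_def)

lemma cmod_add_sq_le: "(cmod (u + v))\<^sup>2 \<le> 2 * (cmod u)\<^sup>2 + 2 * (cmod v)\<^sup>2"
proof -
  have "(cmod (u + v))\<^sup>2 \<le> (cmod u + cmod v)\<^sup>2"
    by (simp add: power_mono norm_triangle_ineq)
  also have "\<dots> \<le> 2 * (cmod u)\<^sup>2 + 2 * (cmod v)\<^sup>2"
    using zero_le_power2[of "cmod u - cmod v"] unfolding power2_sum power2_diff by linarith
  finally show ?thesis .
qed

lemma L2_lincomb:
  assumes "x \<in> L2" "y \<in> L2" shows "(\<lambda>n. a * x n + b * y n) \<in> L2"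
proof -
  have sx: "summable (\<lambda>n. (cmod (x n))\<^sup>2)" and sy: "summable (\<lambda>n. (cmod (y n))\<^sup>2)"
    using assms by (auto simp: L2_def)
  have "norm ((cmod (a * x n + b * y n))\<^sup>2)
          \<le> 2 * (cmod a)\<^sup>2 * (cmod (x n))\<^sup>2 + 2 * (cmod b)\<^sup>2 * (cmod (y n))\<^sup>2" for n
    using cmod_add_sq_le[of "a * x n" "b * y n"] by (simp add: norm_mult power_mult_distrib)
  from summable_comparison_test'[OF _ this] sx sy show ?thesis
    unfolding L2_def by (simp add: summable_add summable_mult)
qed

lemma L2_mult_bounded:
  assumes "x \<in> L2" "\<And>n. cmod (c n) \<le> C" shows "(\<lambda>n. c n * x n) \<in> L2"
proof -
  have "norm ((cmod (c n * x n))\<^sup>2) \<le> C\<^sup>2 * (cmod (x n))\<^sup>2" for n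
    using power_mono[OF assms(2)[of n] norm_ge_zero]
    by (simp add: norm_mult power_mult_distrib mult_right_mono)
  from summable_comparison_test'[OF _ this] assms(1) show ?thesis
    unfolding L2_def by (simp add: summable_mult)
qed

lemma l2norm_mult_bounded_le:
  assumes "x \<in> L2" "\<And>n. cmod (c n) \<le> C" shows "l2norm (\<lambda>n. c n * x n) \<le> C * l2norm x"
proof -
  have C: "0 \<le> C" using assms(2)[of 0] norm_ge_zero order.trans by blast
  have sx: "summable (\<lambda>n. (cmod (x n))\<^sup>2)" using assms by (auto simp: L2_def)
  have le: "(cmod (c n * x n))\<^sup>2 \<le> C\<^sup>2 * (cmod (x n))\<^sup>2" for n
    using power_mono[OF assms(2)[of n] norm_ge_zero]
    by (simp add: norm_mult power_mult_distrib mult_right_mono)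
  have s2: "summable (\<lambda>n. (cmod (c n * x n))\<^sup>2)"
    using L2_mult_bounded[OF assms] by (simp add: L2_def)
  have "(\<Sum>n. (cmod (c n * x n))\<^sup>2) \<le> (\<Sum>n. C\<^sup>2 * (cmod (x n))\<^sup>2)"
    by (rule suminf_le[OF le s2 summable_mult[OF sx]])
  also have "\<dots> = C\<^sup>2 * (\<Sum>n. (cmod (x n))\<^sup>2)" using sx by (rule suminf_mult)
  finally have "sqrt (\<Sum>n. (cmod (c n * x n))\<^sup>2) \<le> sqrt (C\<^sup>2 * (\<Sum>n. (cmod (x n))\<^sup>2))"
    by (rule real_sqrt_le_mono)
  then show ?thesis using C by (simp add: l2norm_def real_sqrt_mult)
qed

lemma L2_shift_right:
  assumes "x \<in> L2" shows "(\<lambda>n. case n of 0 \<Rightarrow> 0 | Suc k \<Rightarrow> x k) \<in> L2"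
  using assms summable_Suc_iff[of "\<lambda>n. (cmod (case n of 0 \<Rightarrow> 0 | Suc k \<Rightarrow> x k))\<^sup>2"]
  by (simp add: L2_def)

lemma l2norm_shift_right:
  assumes "x \<in> L2" shows "l2norm (\<lambda>n. case n of 0 \<Rightarrow> 0 | Suc k \<Rightarrow> x k) = l2norm x"
  using suminf_split_head[OF L2_shift_right[OF assms, unfolded L2_def, simplified]]
  by (simp add: l2norm_def)

lemma L2_shift_left: "x \<in> L2 \<Longrightarrow> (\<lambda>n. x (Suc n)) \<in> L2"
  using summable_Suc_iff[of "\<lambda>n. (cmod (x n))\<^sup>2"] by (simp add: L2_def)

lemma l2norm_shift_left_le:
  assumes "x \<in> L2" shows "l2norm (\<lambda>n. x (Suc n)) \<le> l2norm x"
  using suminf_split_head[of "\<lambda>n. (cmod (x n))\<^sup>2"] assms by (simp add: L2_def l2norm_def)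

lemma l2norm_diff_le:
  assumes "u \<in> L2" "v \<in> L2" "l2norm u \<le> a" "l2norm v \<le> b"
  shows "l2norm (\<lambda>n. u n - v n) \<le> 2 * (a + b)"
proof -
  have su: "summable (\<lambda>n. (cmod (u n))\<^sup>2)" and sv: "summable (\<lambda>n. (cmod (v n))\<^sup>2)"
    using assms by (auto simp: L2_def)
  have "summable (\<lambda>n. (cmod (u n - v n))\<^sup>2)"
    using L2_lincomb[OF assms(1,2), of 1 "-1"] by (simp add: L2_def)
  then have "(\<Sum>n. (cmod (u n - v n))\<^sup>2) \<le> (\<Sum>n. 2 * (cmod (u n))\<^sup>2 + 2 * (cmod (v n))\<^sup>2)"
    using cmod_add_sq_le[of "u _" "- v _"] su sv
    by (intro suminf_le summable_add summable_mult) auto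
  also have "\<dots> = 2 * (l2norm u)\<^sup>2 + 2 * (l2norm v)\<^sup>2"
    using su sv by (simp add: suminf_add[symmetric] suminf_mult l2norm_def suminf_nonneg)
  also have "\<dots> \<le> 2 * a\<^sup>2 + 2 * b\<^sup>2"
    using assms(3,4) l2norm_nonneg[OF assms(1)] l2norm_nonneg[OF assms(2)]
    by (intro add_mono mult_left_mono power_mono) auto
  also have "\<dots> \<le> (2 * (a + b))\<^sup>2"
    using assms(3,4) l2norm_nonneg[OF assms(1)] l2norm_nonneg[OF assms(2)]
    by (simp add: power2_eq_square algebra_simps)
  finally have "l2norm (\<lambda>n. u n - v n) \<le> \<bar>2 * (a + b)\<bar>"
    unfolding l2norm_def by (metis real_sqrt_abs real_sqrt_le_mono)
  moreover have "0 \<le> a + b"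
    using assms(3,4) l2norm_nonneg[OF assms(1)] l2norm_nonneg[OF assms(2)] by linarith
  ultimately show ?thesis by simp
qed

lemma l2norm_single: "l2norm (\<lambda>i. if i = j then c else 0) = cmod c"
proof -
  have "(\<lambda>i. (cmod (if i = j then c else 0))\<^sup>2) = (\<lambda>i. if i = j then (cmod c)\<^sup>2 else 0)"
    by auto
  then show ?thesis
    using sums_single[of j "\<lambda>_. (cmod c)\<^sup>2"] by (simp add: l2norm_def sums_iff)
qed

definition unit_vec :: "nat \<Rightarrow> seq" where
  "unit_vec j = (\<lambda>i. if i = j then 1 else 0)"

lemma L2_unit_vec: "unit_vec j \<in> L2"
proof -
  have "(\<lambda>i. (cmod (unit_vec j i))\<^sup>2) = (\<lambda>i. if i = j then 1 else 0)"
    by (auto simp: unit_vec_def)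
  then show ?thesis
    using sums_summable[OF sums_single[of j "\<lambda>_. 1::real"]] by (simp add: L2_def)
qed

lemma l2norm_unit_vec: "l2norm (unit_vec j) = 1"
  by (simp add: unit_vec_def l2norm_single)

lemma l2inner_unit_vec: "l2inner (unit_vec j) z = cnj (z j)"
proof -
  have "(\<lambda>n. unit_vec j n * cnj (z n)) = (\<lambda>n. if n = j then cnj (z j) else 0)"
    by (auto simp: unit_vec_def)
  then show ?thesis
    using sums_single[of j "\<lambda>_. cnj (z j)"] by (simp add: l2inner_def sums_iff)
qed

lemma cmod_le_l2norm:
  assumes "z \<in> L2" shows "cmod (z n) \<le> l2norm z"
proof -
  have "sum (\<lambda>n. (cmod (z n))\<^sup>2) {n} \<le> (\<Sum>n. (cmod (z n))\<^sup>2)"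
    using assms by (intro sum_le_suminf) (auto simp: L2_def)
  then show ?thesis
    by (simp add: l2norm_def real_le_rsqrt)
qed

lemma summable_l2inner:
  assumes "x \<in> L2" "y \<in> L2" shows "summable (\<lambda>n. x n * cnj (y n))"
proof -
  have "norm (x n * cnj (y n)) \<le> (cmod (x n))\<^sup>2 + (cmod (y n))\<^sup>2" for n
    using zero_le_power2[of "cmod (x n) - cmod (y n)"]
    using mult_nonneg_nonneg[OF norm_ge_zero norm_ge_zero, of "x n" "y n"]
    unfolding norm_mult complex_mod_cnj power2_diff by linarith
  from summable_comparison_test'[OF _ this] assms show ?thesis
    by (simp add: L2_def summable_add)
qed

abbreviation op_minus :: "op \<Rightarrow> op \<Rightarrow> op" where
  "op_minus A B \<equiv> \<lambda>x n. A x n - B x n"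

lemma is_bop_L2: "is_bop A \<Longrightarrow> x \<in> L2 \<Longrightarrow> A x \<in> L2"
  by (simp add: is_bop_def)

lemma is_bop_outside_L2: "is_bop A \<Longrightarrow> x \<notin> L2 \<Longrightarrow> A x = (\<lambda>n. 0)"
  by (simp add: is_bop_def)

lemma is_bop_funpow_L2: "is_bop A \<Longrightarrow> x \<in> L2 \<Longrightarrow> (A ^^ k) x \<in> L2"
  by (induction k) (auto simp: is_bop_L2)

lemma is_bop_scale:
  assumes "is_bop A" "x \<in> L2" shows "A (\<lambda>n. a * x n) = (\<lambda>n. a * A x n)"
proof -
  have "A (\<lambda>n. a * x n + 0 * x n) = (\<lambda>n. a * A x n + 0 * A x n)"
    using assms unfolding is_bop_def by blast
  then show ?thesis by simp
qed

lemma is_bop_bounded_unit_ball: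
  assumes "is_bop A" obtains C where "\<And>x. x \<in> L2 \<Longrightarrow> l2norm x \<le> 1 \<Longrightarrow> l2norm (A x) \<le> C"
proof -
  obtain C where C: "\<And>x. x \<in> L2 \<Longrightarrow> l2norm (A x) \<le> C * l2norm x"
    using assms unfolding is_bop_def by blast
  have "l2norm (A x) \<le> max C 0" if "x \<in> L2" "l2norm x \<le> 1" for x
  proof -
    have "C * l2norm x \<le> max C 0 * 1"
      using that l2norm_nonneg[OF that(1)] by (intro order.trans[OF mult_right_mono mult_left_mono]) auto
    then show ?thesis using C[OF that(1)] by linarith
  qed
  then show thesis by (rule that)
qed

lemma is_bop_op_minus:
  assumes A: "is_bop A" and B: "is_bop B" shows "is_bop (op_minus A B)"
  unfolding is_bop_def
proof (intro conjI ballI allI impI)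
  fix x assume "x \<notin> L2" then show "op_minus A B x = (\<lambda>n. 0)"
    using A B by (simp add: is_bop_outside_L2)
next
  fix x assume "x \<in> L2" then show "op_minus A B x \<in> L2"
    using L2_lincomb[of "A x" "B x" 1 "-1"] A B by (simp add: is_bop_L2)
next
  fix x y a b assume "x \<in> L2" "y \<in> L2"
  then show "op_minus A B (\<lambda>n. a * x n + b * y n) = (\<lambda>n. a * op_minus A B x n + b * op_minus A B y n)"
    using A B unfolding is_bop_def by (simp add: algebra_simps)
next
  obtain CA CB where CA: "\<And>x. x \<in> L2 \<Longrightarrow> l2norm (A x) \<le> CA * l2norm x"
    and CB: "\<And>x. x \<in> L2 \<Longrightarrow> l2norm (B x) \<le> CB * l2norm x"
    using A B unfolding is_bop_def by metis
  have "l2norm (op_minus A B x) \<le> (2 * (CA + CB)) * l2norm x" if "x \<in> L2" for x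
    using l2norm_diff_le[OF is_bop_L2[OF A that] is_bop_L2[OF B that] CA[OF that] CB[OF that]]
    by (simp add: algebra_simps)
  then show "\<exists>C. \<forall>x\<in>L2. l2norm (op_minus A B x) \<le> C * l2norm x" by blast
qed

lemma op_norm_le:
  assumes "\<And>x. x \<in> L2 \<Longrightarrow> l2norm x \<le> 1 \<Longrightarrow> l2norm (A x) \<le> b" shows "op_norm A \<le> b"
  unfolding op_norm_def
proof (rule cSup_least)
  have "(\<lambda>n. 0) \<in> {x \<in> L2. l2norm x \<le> 1}" by simp
  then show "(\<lambda>x. l2norm (A x)) ` {x \<in> L2. l2norm x \<le> 1} \<noteq> {}" by blast
qed (use assms in auto)

lemma l2norm_le_op_norm:
  assumes "is_bop A" "x \<in> L2" "l2norm x \<le> 1" shows "l2norm (A x) \<le> op_norm A"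
proof -
  obtain C where "\<And>x. x \<in> L2 \<Longrightarrow> l2norm x \<le> 1 \<Longrightarrow> l2norm (A x) \<le> C"
    using is_bop_bounded_unit_ball[OF assms(1)] by blast
  then have "bdd_above ((\<lambda>x. l2norm (A x)) ` {x \<in> L2. l2norm x \<le> 1})"
    by (auto intro!: bdd_aboveI)
  then show ?thesis unfolding op_norm_def using assms(2,3) by (auto intro!: cSup_upper)
qed

lemma op_norm_nonneg: "is_bop A \<Longrightarrow> 0 \<le> op_norm A"
  using l2norm_nonneg[OF is_bop_L2[OF _ L2_zero]] l2norm_le_op_norm[OF _ L2_zero] by force

lemma op_norm_cong: "(\<And>x. x \<in> L2 \<Longrightarrow> A x = B x) \<Longrightarrow> op_norm A = op_norm B"
  unfolding op_norm_def by (metis (mono_tags, lifting) image_cong mem_Collect_eq)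

lemma is_bop_eqI:
  assumes A: "is_bop A" and B: "is_bop B"
    and eq: "\<And>x. x \<in> L2 \<Longrightarrow> l2norm x \<le> 1 \<Longrightarrow> A x = B x"
  shows "A = B"
proof
  fix x show "A x = B x"
  proof (cases "x \<in> L2")
    case False then show ?thesis using A B by (simp add: is_bop_outside_L2)
  next
    case True
    define c where "c = l2norm x + 1"
    have c: "c > 0" using l2norm_nonneg[OF True] by (simp add: c_def)
    define y where "y = (\<lambda>n. complex_of_real (1/c) * x n)"
    have cb: "cmod (complex_of_real (1/c)) \<le> 1/c" unfolding norm_of_real using c by simp
    have y: "y \<in> L2" unfolding y_def by (rule L2_mult_bounded[OF True cb])
    have "l2norm y \<le> 1/c * l2norm x" unfolding y_def by (rule l2norm_mult_bounded_le[OF True cb])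
    also have "\<dots> \<le> 1" using c by (simp add: c_def field_simps)
    finally have "A y = B y" using eq[OF y] by blast
    then have "(\<lambda>n. complex_of_real (1/c) * A x n) = (\<lambda>n. complex_of_real (1/c) * B x n)"
      unfolding y_def is_bop_scale[OF A True] is_bop_scale[OF B True] .
    then show ?thesis using c by (simp add: fun_eq_iff)
  qed
qed

lemma op_norm_limit_unique:
  assumes A: "\<And>k. is_bop (A k)" and B: "is_bop B" and B': "is_bop B'"
    and lim: "(\<lambda>k. op_norm (op_minus (A k) B)) \<longlonglongrightarrow> 0"
    and lim': "(\<lambda>k. op_norm (op_minus (A k) B')) \<longlonglongrightarrow> 0"
  shows "B = B'"
proof (rule is_bop_eqI[OF B B'])
  fix x assume x: "x \<in> L2" "l2norm x \<le> 1"
  have coord: "cmod (op_minus (A k) G x n) \<le> op_norm (op_minus (A k) G)" if "is_bop G" for G k n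
    using order.trans[OF cmod_le_l2norm[OF is_bop_L2[OF is_bop_op_minus[OF A that] x(1)]]
      l2norm_le_op_norm[OF is_bop_op_minus[OF A that] x]] .
  show "B x = B' x"
  proof
    fix n
    have "cmod (B x n - B' x n) \<le> op_norm (op_minus (A k) B) + op_norm (op_minus (A k) B')" for k
      using norm_triangle_ineq4[of "A k x n - B x n" "A k x n - B' x n"] coord[OF B, of k n]
        coord[OF B', of k n] by (simp add: norm_minus_commute)
    then have "cmod (B x n - B' x n) \<le> 0 + 0"
      by (intro LIMSEQ_le_const[OF tendsto_add[OF lim lim']]) auto
    then show "B x n = B' x n" by simp
  qed
qed

section \<open>Diagonal operators and weighted shifts\<close>

definition diag_op :: "(nat \<Rightarrow> real) \<Rightarrow> op" where
  "diag_op d = (\<lambda>x. if x \<in> L2 then (\<lambda>n. complex_of_real (d n) * x n) else (\<lambda>n. 0))"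

definition wshift :: "(nat \<Rightarrow> real) \<Rightarrow> op" where
  "wshift w = (\<lambda>x. if x \<in> L2 then (\<lambda>n. case n of 0 \<Rightarrow> 0 | Suc k \<Rightarrow> complex_of_real (w k) * x k)
                  else (\<lambda>n. 0))"

definition bshift :: "(nat \<Rightarrow> real) \<Rightarrow> op" where
  "bshift w = (\<lambda>x. if x \<in> L2 then (\<lambda>n. complex_of_real (w n) * x (Suc n)) else (\<lambda>n. 0))"

lemma diag_op_L2: "x \<in> L2 \<Longrightarrow> (\<And>n. \<bar>d n\<bar> \<le> C) \<Longrightarrow> diag_op d x \<in> L2"
  using L2_mult_bounded[of x "\<lambda>n. complex_of_real (d n)" C] by (simp add: diag_op_def)

lemma l2norm_diag_op_le: "x \<in> L2 \<Longrightarrow> (\<And>n. \<bar>d n\<bar> \<le> C) \<Longrightarrow> l2norm (diag_op d x) \<le> C * l2norm x"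
  using l2norm_mult_bounded_le[of x "\<lambda>n. complex_of_real (d n)" C] by (simp add: diag_op_def)

lemma is_bop_diag_op:
  assumes "\<And>n. \<bar>d n\<bar> \<le> C" shows "is_bop (diag_op d)"
  unfolding is_bop_def
proof (intro conjI ballI allI impI)
  fix x y a b assume "x \<in> L2" "y \<in> L2"
  then show "diag_op d (\<lambda>n. a * x n + b * y n) = (\<lambda>n. a * diag_op d x n + b * diag_op d y n)"
    using L2_lincomb by (simp add: diag_op_def algebra_simps)
next
  show "\<exists>C. \<forall>x\<in>L2. l2norm (diag_op d x) \<le> C * l2norm x"
    using l2norm_diag_op_le[of _ d C] assms by blast
qed (use assms diag_op_L2 in \<open>auto simp: diag_op_def\<close>)

lemma op_norm_diag_op_le: "(\<And>n. \<bar>d n\<bar> \<le> b) \<Longrightarrow> op_norm (diag_op d) \<le> b"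
  by (rule op_norm_le, rule order.trans[OF l2norm_diag_op_le])
     (auto intro: mult_left_le order.trans[OF abs_ge_zero])

lemma abs_le_op_norm_diag_op:
  assumes "\<And>n. \<bar>d n\<bar> \<le> C" shows "\<bar>d n\<bar> \<le> op_norm (diag_op d)"
proof -
  have "diag_op d (unit_vec n) = (\<lambda>i. if i = n then complex_of_real (d n) else 0)"
    using L2_unit_vec[of n] by (auto simp: diag_op_def unit_vec_def)
  then have "l2norm (diag_op d (unit_vec n)) = \<bar>d n\<bar>"
    by (simp add: l2norm_single)
  then show ?thesis
    using l2norm_le_op_norm[OF is_bop_diag_op[of d C] L2_unit_vec, of n] assms
    by (simp add: l2norm_unit_vec)
qed

lemma wshift_0 [simp]: "wshift w x 0 = 0"
  by (simp add: wshift_def)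

lemma wshift_Suc: "x \<in> L2 \<Longrightarrow> wshift w x (Suc n) = complex_of_real (w n) * x n"
  by (simp add: wshift_def)

lemma wshift_L2: "x \<in> L2 \<Longrightarrow> (\<And>n. \<bar>w n\<bar> \<le> C) \<Longrightarrow> wshift w x \<in> L2"
  using L2_shift_right[OF diag_op_L2[of x w C]] by (auto simp: wshift_def diag_op_def)

lemma is_bop_wshift:
  assumes "\<And>n. \<bar>w n\<bar> \<le> C" shows "is_bop (wshift w)"
  unfolding is_bop_def
proof (intro conjI ballI allI impI)
  fix x y a b assume "x \<in> L2" "y \<in> L2"
  then show "wshift w (\<lambda>n. a * x n + b * y n) = (\<lambda>n. a * wshift w x n + b * wshift w y n)"
    using L2_lincomb by (auto simp: wshift_def algebra_simps split: nat.split)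
next
  have "l2norm (wshift w x) = l2norm (diag_op w x)" if "x \<in> L2" for x
    using l2norm_shift_right[OF diag_op_L2[of x w C]] that assms by (simp add: wshift_def diag_op_def)
  then show "\<exists>C. \<forall>x\<in>L2. l2norm (wshift w x) \<le> C * l2norm x"
    using l2norm_diag_op_le[of _ w C] assms by auto
qed (use assms wshift_L2 in \<open>auto simp: wshift_def\<close>)

lemma is_bop_bshift:
  assumes "\<And>n. \<bar>w n\<bar> \<le> C" shows "is_bop (bshift w)"
  unfolding is_bop_def
proof (intro conjI ballI allI impI)
  fix x assume "x \<in> L2"
  then show "bshift w x \<in> L2"
    using diag_op_L2[OF L2_shift_left, of x w C] assms by (simp add: bshift_def diag_op_def L2_shift_left)
next
  fix x y a b assume "x \<in> L2" "y \<in> L2"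
  then show "bshift w (\<lambda>n. a * x n + b * y n) = (\<lambda>n. a * bshift w x n + b * bshift w y n)"
    using L2_lincomb by (simp add: bshift_def algebra_simps)
next
  have C: "0 \<le> C" using assms[of 0] by linarith
  have "l2norm (bshift w x) \<le> C * l2norm x" if x: "x \<in> L2" for x
  proof -
    have "l2norm (bshift w x) = l2norm (diag_op w (\<lambda>n. x (Suc n)))"
      using x L2_shift_left[OF x] by (simp add: bshift_def diag_op_def)
    also have "\<dots> \<le> C * l2norm (\<lambda>n. x (Suc n))" using l2norm_diag_op_le[OF L2_shift_left[OF x], of w C] assms by blast
    also have "\<dots> \<le> C * l2norm x" using l2norm_shift_left_le[OF x] C by (rule mult_left_mono)
    finally show ?thesis .
  qed
  then show "\<exists>C. \<forall>x\<in>L2. l2norm (bshift w x) \<le> C * l2norm x" by blast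
qed (simp add: bshift_def)

lemma l2inner_wshift:
  assumes "\<And>n. \<bar>w n\<bar> \<le> C" "x \<in> L2" "y \<in> L2"
  shows "l2inner (wshift w x) y = l2inner x (bshift w y)"
proof -
  have "summable (\<lambda>n. wshift w x n * cnj (y n))"
    using summable_l2inner[OF wshift_L2[of x w C] assms(3)] assms(1,2) by blast
  then have "l2inner (wshift w x) y = (\<Sum>n. wshift w x (Suc n) * cnj (y (Suc n)))"
    unfolding l2inner_def by (subst suminf_split_head) simp_all
  also have "\<dots> = l2inner x (bshift w y)"
    using assms(2,3) by (simp add: l2inner_def wshift_Suc bshift_def mult_ac)
  finally show ?thesis .
qed

lemma adj_wshift:
  assumes "\<And>n. \<bar>w n\<bar> \<le> C" shows "adj (wshift w) = bshift w"
  unfolding adj_def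
proof (rule the_equality)
  show "is_bop (bshift w) \<and> (\<forall>x\<in>L2. \<forall>y\<in>L2. l2inner (wshift w x) y = l2inner x (bshift w y))"
    using is_bop_bshift[of w C] l2inner_wshift[of w C] assms by blast
next
  fix S assume S: "is_bop S \<and> (\<forall>x\<in>L2. \<forall>y\<in>L2. l2inner (wshift w x) y = l2inner x (S y))"
  show "S = bshift w"
  proof
    fix y show "S y = bshift w y"
    proof (cases "y \<in> L2")
      case False then show ?thesis using S by (simp add: is_bop_outside_L2 bshift_def)
    next
      case True
      have "cnj (S y n) = cnj (bshift w y n)" for n
        using S l2inner_wshift[of w C, OF _ L2_unit_vec True] assms L2_unit_vec True
        by (metis l2inner_unit_vec)
      then show ?thesis by (simp add: fun_eq_iff)
    qed
  qed
qed

lemma wshift_funpow: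
  assumes "x \<in> L2" "\<And>n. \<bar>w n\<bar> \<le> C"
  shows "(wshift w ^^ k) x = (\<lambda>n. if k \<le> n then complex_of_real (\<Prod>i\<in>{n-k..<n}. w i) * x (n-k) else 0)"
proof (induction k)
  case (Suc k)
  have L: "(wshift w ^^ k) x \<in> L2" using is_bop_funpow_L2[OF is_bop_wshift[of w C] assms(1)] assms(2) by blast
  show ?case
  proof
    fix n show "(wshift w ^^ Suc k) x n
      = (if Suc k \<le> n then complex_of_real (\<Prod>i\<in>{n - Suc k..<n}. w i) * x (n - Suc k) else 0)"
    proof (cases n)
      case (Suc m)
      have "k \<le> m \<Longrightarrow> (\<Prod>i\<in>{m-k..<Suc m}. w i) = w m * (\<Prod>i\<in>{m-k..<m}. w i)"
        by (subst prod.atLeastLessThan_Suc) auto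
      then show ?thesis using Suc L by (auto simp: wshift_Suc Suc.IH)
    qed simp
  qed
qed simp

lemma wshift_funpow_l2norm_sums:
  assumes "x \<in> L2" "\<And>n. \<bar>w n\<bar> \<le> C"
  shows "(\<lambda>j. (\<Prod>i\<in>{j..<j+k}. w i)\<^sup>2 * (cmod (x j))\<^sup>2) sums (l2norm ((wshift w ^^ k) x))\<^sup>2"
proof -
  define g where "g = (\<lambda>n. (cmod ((wshift w ^^ k) x n))\<^sup>2)"
  have "summable g"
    using is_bop_funpow_L2[OF is_bop_wshift[of w C] assms(1)] assms(2) by (simp add: L2_def g_def)
  moreover have "(\<Sum>i<k. g i) = 0" by (simp add: g_def wshift_funpow[OF assms])
  ultimately have "(\<lambda>i. g (i + k)) sums (suminf g)"
    using sums_iff_shift[of g k "suminf g"] summable_sums by fastforce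
  moreover have "g (j + k) = (\<Prod>i\<in>{j..<j+k}. w i)\<^sup>2 * (cmod (x j))\<^sup>2" for j
    by (simp add: g_def wshift_funpow[OF assms] norm_mult power_mult_distrib del: of_real_prod)
  moreover have "suminf g = (l2norm ((wshift w ^^ k) x))\<^sup>2"
    using suminf_nonneg[OF \<open>summable g\<close>] by (simp add: l2norm_def g_def)
  ultimately show ?thesis by simp
qed

lemma diag_op_funpow:
  assumes "x \<in> L2" "\<And>n. \<bar>d n\<bar> \<le> C"
  shows "(diag_op d ^^ i) x = (\<lambda>n. complex_of_real (d n ^ i) * x n)"
proof (induction i)
  case (Suc i)
  have "(diag_op d ^^ i) x \<in> L2"
    using is_bop_funpow_L2[OF is_bop_diag_op[of d C] assms(1)] assms(2) by blast
  then have "(diag_op d ^^ Suc i) x = (\<lambda>n. complex_of_real (d n) * (diag_op d ^^ i) x n)"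
    by (simp add: diag_op_def)
  then show ?case by (simp add: Suc.IH mult_ac)
qed simp

lemma poly_op_diag_op:
  assumes "x \<in> L2" "\<And>n. \<bar>d n\<bar> \<le> C"
  shows "poly_op p (diag_op d) x = diag_op (\<lambda>n. poly p (d n)) x"
proof -
  have "poly_op p (diag_op d) x = (\<lambda>n. \<Sum>i\<le>degree p. complex_of_real (coeff p i * d n ^ i) * x n)"
    unfolding poly_op_def diag_op_funpow[OF assms] by (simp add: mult.assoc)
  also have "\<dots> = diag_op (\<lambda>n. poly p (d n)) x"
    using assms(1) by (simp add: diag_op_def poly_altdef sum_distrib_right)
  finally show ?thesis .
qed

lemma uniform_polynomial_approximation:
  assumes "continuous_on {a..b} f"
  obtains p :: "nat \<Rightarrow> real poly"
    where "uniform_limit {a..b} (\<lambda>k t. poly (p k) t) f sequentially"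
proof -
  have "\<exists>q. \<forall>t\<in>{a..b}. \<bar>f t - poly q t\<bar> < 1 / (real k + 1)" for k :: nat
  proof -
    obtain g where g: "real_polynomial_function g" "\<And>t. t \<in> {a..b} \<Longrightarrow> \<bar>f t - g t\<bar> < 1 / (real k + 1)"
      using Stone_Weierstrass_real_polynomial_function[OF compact_Icc assms, of "1 / (real k + 1)"]
      by auto
    obtain c n where "g = (\<lambda>t. \<Sum>i\<le>n. c i * t ^ i)"
      using real_polynomial_function_imp_sum[OF g(1)] by blast
    then have "poly (\<Sum>i\<le>n. monom (c i) i) t = g t" for t
      by (simp add: poly_sum poly_monom)
    then show ?thesis using g(2) by metis
  qed
  then obtain p where p: "\<And>k t. t \<in> {a..b} \<Longrightarrow> \<bar>f t - poly (p k) t\<bar> < 1 / (real k + 1)"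
    by metis
  have "uniform_limit {a..b} (\<lambda>k t. poly (p k) t) f sequentially"
    unfolding uniform_limit_sequentially_iff
  proof (intro allI impI)
    fix e :: real assume "0 < e"
    then obtain N :: nat where N: "0 < N" "inverse (real N) < e"
      using ex_inverse_of_nat_less by blast
    have "\<bar>f t - poly (p k) t\<bar> < e" if "N \<le> k" "t \<in> {a..b}" for k t
    proof -
      have "1 / (real k + 1) \<le> inverse (real N)" using that N(1) by (simp add: field_simps)
      then show ?thesis using p[OF that(2), of k] N(2) by linarith
    qed
    then show "\<exists>N. \<forall>k\<ge>N. \<forall>t\<in>{a..b}. dist (poly (p k) t) (f t) < e"
      by (metis dist_real_def abs_minus_commute)
  qed
  then show thesis by (rule that)
qed

text \<open>On L2 the polynomial p (diag_op d) is diag_op (poly p \<circ> d), and uniform convergence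
  of the polynomials on [0, \<parallel>diag_op d\<parallel>] is convergence of these diagonals in operator norm.\<close>
lemma op_pow_diag_op:
  assumes r: "0 < r" and d: "\<And>n. 0 \<le> d n" "\<And>n. d n \<le> C"
  shows "op_pow r (diag_op d) = diag_op (\<lambda>n. d n powr r)"
proof -
  have dC: "\<bar>d n\<bar> \<le> C" for n using d[of n] by simp
  define M where "M = op_norm (diag_op d)"
  have dM: "d n \<in> {0..M}" for n
    using abs_le_op_norm_diag_op[of d C n] dC d(1)[of n] by (simp add: M_def)
  define B where "B = diag_op (\<lambda>n. d n powr r)"
  have B: "is_bop B"
    unfolding B_def using d powr_mono2[of r _ C] r
    by (intro is_bop_diag_op[of _ "C powr r"]) (simp add: less_imp_le)
  have poly_diag: "op_norm (op_minus (poly_op q (diag_op d)) G) 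
      = op_norm (op_minus (diag_op (\<lambda>n. poly q (d n))) G)" for q G
    by (rule op_norm_cong) (simp add: poly_op_diag_op[OF _ dC])
  have is_bop_poly: "is_bop (diag_op (\<lambda>n. poly q (d n)))" for q
  proof -
    have "compact (poly q ` {0..M})"
      by (intro compact_continuous_image continuous_intros compact_Icc)
    then obtain b where "\<forall>t\<in>{0..M}. norm (poly q t) \<le> b"
      unfolding bounded_iff by (meson compact_imp_bounded bounded_iff imageI)
    then show ?thesis using dM by (intro is_bop_diag_op[of _ b]) auto
  qed
  have conv: "(\<lambda>k. op_norm (op_minus (poly_op (p k) (diag_op d)) B)) \<longlonglongrightarrow> 0"
    if U: "uniform_limit {0..M} (\<lambda>k t. poly (p k) t) (\<lambda>t. t powr r) sequentially" for p
  proof (rule tendstoI)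
    fix e :: real assume "0 < e"
    show "\<forall>\<^sub>F k in sequentially. dist (op_norm (op_minus (poly_op (p k) (diag_op d)) B)) 0 < e"
    proof (rule eventually_mono[OF uniform_limitD[OF U, of "e/2"]])
      show "0 < e/2" using \<open>0 < e\<close> by simp
    next
      fix k assume close: "\<forall>t\<in>{0..M}. dist (poly (p k) t) (t powr r) < e/2"
      have "op_norm (op_minus (poly_op (p k) (diag_op d)) B)
          = op_norm (diag_op (\<lambda>n. poly (p k) (d n) - d n powr r))"
        unfolding poly_diag B_def by (rule op_norm_cong) (simp add: diag_op_def algebra_simps)
      also have "\<dots> \<le> e/2"
        using close dM by (intro op_norm_diag_op_le) (simp add: dist_real_def less_imp_le)
      finally show "dist (op_norm (op_minus (poly_op (p k) (diag_op d)) B)) 0 < e"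
        using op_norm_nonneg[OF is_bop_op_minus[OF is_bop_poly B]] \<open>0 < e\<close> by (simp add: poly_diag)
    qed
  qed
  show ?thesis
    unfolding op_pow_def M_def[symmetric] B_def[symmetric]
  proof (rule the_equality)
    show "is_bop B \<and> (\<forall>p. uniform_limit {0..M} (\<lambda>k t. poly (p k) t) (\<lambda>t. t powr r) sequentially \<longrightarrow>
            (\<lambda>k. op_norm (op_minus (poly_op (p k) (diag_op d)) B)) \<longlonglongrightarrow> 0)"
      using B conv by blast
  next
    fix B' assume B': "is_bop B' \<and> (\<forall>p. uniform_limit {0..M} (\<lambda>k t. poly (p k) t) (\<lambda>t. t powr r) sequentially \<longrightarrow>
            (\<lambda>k. op_norm (op_minus (poly_op (p k) (diag_op d)) B')) \<longlonglongrightarrow> 0)"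
    have "continuous_on {0..M} (\<lambda>t. t powr r)"
      by (rule continuous_on_powr') (use r in \<open>auto intro: continuous_intros\<close>)
    then obtain p where U: "uniform_limit {0..M} (\<lambda>k t. poly (p k) t) (\<lambda>t. t powr r) sequentially"
      by (rule uniform_polynomial_approximation)
    show "B' = B"
      by (rule op_norm_limit_unique[OF is_bop_poly, of B' B p])
         (use B' B conv[OF U] U in \<open>simp_all add: poly_diag[symmetric]\<close>)
  qed
qed

section \<open>Polar decomposition and Aluthge transform of weighted shifts\<close>

lemma adj_wshift_comp_wshift:
  assumes "\<And>n. \<bar>w n\<bar> \<le> C" shows "adj (wshift w) \<circ> wshift w = diag_op (\<lambda>n. (w n)\<^sup>2)"
proof
  fix x show "(adj (wshift w) \<circ> wshift w) x = diag_op (\<lambda>n. (w n)\<^sup>2) x"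
    unfolding adj_wshift[of w C, OF assms] comp_def
    using wshift_L2[of x w C] assms
    by (cases "x \<in> L2") (auto simp: bshift_def diag_op_def wshift_Suc power2_eq_square,
      simp add: wshift_def)
qed

lemma abs_op_wshift:
  assumes "\<And>n. 0 \<le> w n" "\<And>n. w n \<le> C" shows "abs_op (wshift w) = diag_op w"
proof -
  have "\<bar>w n\<bar> \<le> C" for n using assms[of n] by simp
  then have "abs_op (wshift w) = op_pow (1/2) (diag_op (\<lambda>n. (w n)\<^sup>2))"
    unfolding abs_op_def using adj_wshift_comp_wshift[of w C] by simp
  also have "\<dots> = diag_op (\<lambda>n. ((w n)\<^sup>2) powr (1/2))"
    by (rule op_pow_diag_op[of _ _ "C\<^sup>2"]) (use assms in \<open>auto intro: power_mono\<close>)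
  also have "\<dots> = diag_op w"
    using assms(1) by (simp add: powr_half_sqrt)
  finally show ?thesis .
qed

text \<open>With weights bounded away from 0, |T| = diag_op w is invertible, so V is forced to be
  the unweighted shift.\<close>
lemma polar_V_wshift:
  assumes c: "0 < c" and w: "\<And>n. c \<le> w n" "\<And>n. w n \<le> C"
  shows "polar_V (wshift w) = wshift (\<lambda>_. 1)"
proof -
  have w0: "0 < w n" for n using c w(1)[of n] by linarith
  have wC: "\<bar>w n\<bar> \<le> C" for n using w0[of n] w(2)[of n] by simp
  have shift: "is_bop (wshift (\<lambda>_. 1))" by (rule is_bop_wshift[of _ 1]) simp
  have factor: "wshift (\<lambda>_. 1) (diag_op w x) = wshift w x" if "x \<in> L2" for x
    using diag_op_L2[OF that wC] that by (auto simp: wshift_def diag_op_def split: nat.split)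
  show ?thesis
    unfolding polar_V_def abs_op_wshift[OF less_imp_le[OF w0] w(2)]
  proof (rule the_equality)
    have "wshift (\<lambda>_. 1) x = (\<lambda>n. 0)" if "x \<in> L2" "wshift w x = (\<lambda>n. 0)" for x
    proof -
      have "x n = 0" for n
        using fun_cong[OF that(2), of "Suc n"] w0[of n] by (simp add: wshift_Suc[OF that(1)])
      then show ?thesis using that(1) by (simp add: wshift_def fun_eq_iff split: nat.split)
    qed
    then show "is_bop (wshift (\<lambda>_. 1)) \<and> (\<forall>x\<in>L2. wshift (\<lambda>_. 1) (diag_op w x) = wshift w x) \<and>
        (\<forall>x\<in>L2. wshift w x = (\<lambda>n. 0) \<longrightarrow> wshift (\<lambda>_. 1) x = (\<lambda>n. 0))"
      using shift factor by blast
  next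
    fix V assume V: "is_bop V \<and> (\<forall>x\<in>L2. V (diag_op w x) = wshift w x) \<and>
        (\<forall>x\<in>L2. wshift w x = (\<lambda>n. 0) \<longrightarrow> V x = (\<lambda>n. 0))"
    show "V = wshift (\<lambda>_. 1)"
    proof
      fix y show "V y = wshift (\<lambda>_. 1) y"
      proof (cases "y \<in> L2")
        case False then show ?thesis using V by (simp add: is_bop_outside_L2 wshift_def)
      next
        case True
        define x where "x = diag_op (\<lambda>n. 1 / w n) y"
        have x: "x \<in> L2"
          unfolding x_def using w0 w(1) c by (intro diag_op_L2[OF True, of _ "1/c"]) (simp add: frac_le less_imp_le)
        have "diag_op w x = y" using x True w0 by (simp add: x_def diag_op_def fun_eq_iff)
          (metis less_irrefl)
        then show ?thesis using V x factor[OF x] by metis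
      qed
    qed
  qed
qed

lemma aluthge_wshift:
  assumes l: "0 < l" "l < 1" and c: "0 < c" and w: "\<And>n. c \<le> w n" "\<And>n. w n \<le> C"
  shows "aluthge l (wshift w) = wshift (\<lambda>n. w n powr (1 - l) * w (Suc n) powr l)"
proof -
  have w0: "0 < w n" for n using c w(1)[of n] by linarith
  have pow_bound: "\<bar>w n powr r\<bar> \<le> C powr r" if "0 \<le> r" for r n
    using powr_mono2[OF that less_imp_le[OF w0] w(2)] by simp
  have "aluthge l (wshift w)
      = diag_op (\<lambda>n. w n powr l) \<circ> wshift (\<lambda>_. 1) \<circ> diag_op (\<lambda>n. w n powr (1 - l))"
    unfolding aluthge_def abs_op_wshift[OF less_imp_le[OF w0] w(2)] polar_V_wshift[OF c w]
    using op_pow_diag_op[of l w C] op_pow_diag_op[of "1 - l" w C] l w(2) w0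
    by (simp add: less_imp_le)
  also have "\<dots> = wshift (\<lambda>n. w n powr (1 - l) * w (Suc n) powr l)"
  proof
    fix x show "(diag_op (\<lambda>n. w n powr l) \<circ> wshift (\<lambda>_. 1) \<circ> diag_op (\<lambda>n. w n powr (1 - l))) x
        = wshift (\<lambda>n. w n powr (1 - l) * w (Suc n) powr l) x"
    proof (cases "x \<in> L2")
      case True
      have y: "diag_op (\<lambda>n. w n powr (1 - l)) x \<in> L2"
        using diag_op_L2[OF True pow_bound] l by simp
      then have "wshift (\<lambda>_. 1) (diag_op (\<lambda>n. w n powr (1 - l)) x) \<in> L2"
        by (intro wshift_L2[of _ _ 1]) simp_all
      then show ?thesis
        using True y by (simp add: diag_op_def wshift_def fun_eq_iff mult_ac split: nat.split)
    qed (simp add: diag_op_def wshift_def fun_eq_iff split: nat.split)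
  qed
  finally show ?thesis .
qed

section \<open>m-isometric weighted shifts\<close>

definition alt_diff :: "nat \<Rightarrow> (nat \<Rightarrow> real) \<Rightarrow> nat \<Rightarrow> real" where
  "alt_diff m h j = (\<Sum>k\<le>m. (-1) ^ k * real (m choose k) * h (j + k))"

lemma alt_diff_0 [simp]: "alt_diff 0 h j = h j"
  by (simp add: alt_diff_def)

lemma alt_diff_split_head:
  "alt_diff m h j = h j + (\<Sum>k\<le>m. (-1) ^ Suc k * real (m choose Suc k) * h (j + Suc k))"
proof -
  have "alt_diff m h j = (\<Sum>k\<le>Suc m. (-1) ^ k * real (m choose k) * h (j + k))"
    unfolding alt_diff_def by (simp add: binomial_eq_0)
  then show ?thesis by (subst (asm) sum.atMost_Suc_shift) simp
qed

lemma alt_diff_Suc: "alt_diff (Suc m) h j = alt_diff m h j - alt_diff m h (Suc j)"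
proof -
  have "alt_diff (Suc m) h j
      = h j + (\<Sum>k\<le>m. (-1) ^ Suc k * real (m choose Suc k) * h (j + Suc k))
            + (\<Sum>k\<le>m. (-1) ^ Suc k * real (m choose k) * h (j + Suc k))"
    unfolding alt_diff_def by (subst sum.atMost_Suc_shift) (simp add: sum.distrib[symmetric] algebra_simps)
  also have "(\<Sum>k\<le>m. (-1) ^ Suc k * real (m choose k) * h (j + Suc k)) = - alt_diff m h (Suc j)"
    unfolding alt_diff_def by (simp add: sum_negf[symmetric])
  finally show ?thesis using alt_diff_split_head[of m h j] by simp
qed

lemma alt_diff_diff: "alt_diff m (\<lambda>i. f i - g i) j = alt_diff m f j - alt_diff m g j"
  unfolding alt_diff_def by (simp add: sum_subtractf[symmetric] algebra_simps)

lemma alt_diff_shift: "alt_diff m h (Suc j) = alt_diff m (\<lambda>i. h (Suc i)) j"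
  by (simp add: alt_diff_def)

lemma alt_diff_const: "alt_diff (Suc m) (\<lambda>i. c) j = 0"
  by (induction m arbitrary: j) (simp_all add: alt_diff_Suc)

lemma alt_diff_affine: "alt_diff (Suc (Suc m)) (\<lambda>i. a * real i + b) j = 0"
proof -
  have "alt_diff (Suc (Suc m)) (\<lambda>i. a * real i + b) j
      = alt_diff (Suc m) (\<lambda>i. (a * real i + b) - (a * real (Suc i) + b)) j"
    unfolding alt_diff_Suc[of "Suc m"] alt_diff_diff alt_diff_shift by simp
  also have "\<dots> = alt_diff (Suc m) (\<lambda>i. - a) j" by (simp add: algebra_simps)
  finally show ?thesis by (simp add: alt_diff_const)
qed

lemma alt_diff_eq_0_tendsto_0:
  assumes "\<And>j. alt_diff m h j = 0" "h \<longlonglongrightarrow> 0" shows "h j = 0"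
  using assms
proof (induction m arbitrary: h j)
  case (Suc m)
  define g where "g = (\<lambda>i. h i - h (Suc i))"
  have "alt_diff m g j = 0" for j
    using Suc.prems(1)[of j] unfolding g_def alt_diff_diff alt_diff_Suc by (simp add: alt_diff_def)
  moreover have "g \<longlonglongrightarrow> 0"
    unfolding g_def using tendsto_diff[OF Suc.prems(2) LIMSEQ_Suc[OF Suc.prems(2)]] by simp
  ultimately have "g i = 0" for i using Suc.IH by blast
  then have "h i = h 0" for i by (induction i) (simp_all add: g_def)
  then have "h = (\<lambda>i. h 0)" by (simp add: fun_eq_iff)
  then show ?case using Suc.prems(2) LIMSEQ_const_iff[of "h 0" 0] \<open>\<And>i. h i = h 0\<close> by simp
qed simp

lemma m_isometry_wshift_iff:
  assumes "\<And>n. \<bar>w n\<bar> \<le> C"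
  shows "m_isometry m (wshift w) \<longleftrightarrow>
    (\<forall>j. (\<Sum>k\<le>m. (-1) ^ k * real (m choose k) * (\<Prod>i\<in>{j..<j+k}. w i)\<^sup>2) = 0)"
proof
  assume iso: "m_isometry m (wshift w)"
  show "\<forall>j. (\<Sum>k\<le>m. (-1) ^ k * real (m choose k) * (\<Prod>i\<in>{j..<j+k}. w i)\<^sup>2) = 0"
  proof
    fix j
    have "(l2norm ((wshift w ^^ k) (unit_vec j)))\<^sup>2 = (\<Prod>i\<in>{j..<j+k}. w i)\<^sup>2" for k
    proof -
      have "(\<lambda>i. (\<Prod>n\<in>{i..<i+k}. w n)\<^sup>2 * (cmod (unit_vec j i))\<^sup>2)
          = (\<lambda>i. if i = j then (\<Prod>n\<in>{j..<j+k}. w n)\<^sup>2 else 0)"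
        by (auto simp: unit_vec_def)
      moreover have "(\<lambda>i. (\<Prod>n\<in>{i..<i+k}. w n)\<^sup>2 * (cmod (unit_vec j i))\<^sup>2)
          sums (l2norm ((wshift w ^^ k) (unit_vec j)))\<^sup>2"
        using wshift_funpow_l2norm_sums[OF L2_unit_vec, of w C] assms by blast
      ultimately show ?thesis
        using sums_single[of j "\<lambda>_. (\<Prod>n\<in>{j..<j+k}. w n)\<^sup>2"] sums_unique2 by force
    qed
    then show "(\<Sum>k\<le>m. (-1) ^ k * real (m choose k) * (\<Prod>i\<in>{j..<j+k}. w i)\<^sup>2) = 0"
      using iso L2_unit_vec[of j] unfolding m_isometry_def by (metis (no_types, lifting) sum.cong)
  qed
next
  assume coeff: "\<forall>j. (\<Sum>k\<le>m. (-1) ^ k * real (m choose k) * (\<Prod>i\<in>{j..<j+k}. w i)\<^sup>2) = 0"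
  show "m_isometry m (wshift w)"
    unfolding m_isometry_def
  proof
    fix x assume x: "x \<in> L2"
    have "(\<lambda>j. \<Sum>k\<le>m. (-1) ^ k * real (m choose k) * ((\<Prod>i\<in>{j..<j+k}. w i)\<^sup>2 * (cmod (x j))\<^sup>2))
        sums (\<Sum>k\<le>m. (-1) ^ k * real (m choose k) * (l2norm ((wshift w ^^ k) x))\<^sup>2)"
      using wshift_funpow_l2norm_sums[OF x, of w C] assms by (intro sums_sum sums_mult) auto
    moreover have "(\<Sum>k\<le>m. (-1) ^ k * real (m choose k) * ((\<Prod>i\<in>{j..<j+k}. w i)\<^sup>2 * (cmod (x j))\<^sup>2))
        = 0" for j
      using coeff by (simp add: sum_distrib_right[symmetric] mult.assoc[symmetric])
    ultimately show "(\<Sum>k\<le>m. (-1) ^ k * real (m choose k) * (l2norm ((wshift w ^^ k) x))\<^sup>2) = 0"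
      by (simp add: sums_0 sums_unique2)
  qed
qed

lemma prod_sq_eq_ratio:
  fixes w \<mu> :: "nat \<Rightarrow> real"
  assumes "\<And>n. (w n)\<^sup>2 = \<mu> (Suc n) / \<mu> n" "\<And>n. 0 < \<mu> n"
  shows "(\<Prod>i\<in>{j..<j+k}. w i)\<^sup>2 = \<mu> (j + k) / \<mu> j"
proof (induction k)
  case (Suc k)
  have "\<mu> (j + k) \<noteq> 0" using assms(2)[of "j + k"] by simp
  then show ?case
    by (simp add: prod.atLeastLessThan_Suc power_mult_distrib assms(1) Suc.IH)
qed (use assms(2)[of j] in simp)

text \<open>\<mu> is the moment sequence of the shift up to a constant factor: \<mu> n = \<parallel>T^n e_0\<parallel>^2 \<mu> 0.\<close>
lemma m_isometry_wshift_iff_moments: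
  fixes \<mu> :: "nat \<Rightarrow> real"
  assumes "\<And>n. \<bar>w n\<bar> \<le> C" "\<And>n. (w n)\<^sup>2 = \<mu> (Suc n) / \<mu> n" "\<And>n. 0 < \<mu> n"
  shows "m_isometry m (wshift w) \<longleftrightarrow> (\<forall>j. alt_diff m \<mu> j = 0)"
proof -
  have "(\<Sum>k\<le>m. (-1) ^ k * real (m choose k) * (\<Prod>i\<in>{j..<j+k}. w i)\<^sup>2) = alt_diff m \<mu> j / \<mu> j" for j
    using prod_sq_eq_ratio[of w \<mu>] assms(2,3) by (simp add: alt_diff_def sum_divide_distrib)
  then show ?thesis
    using m_isometry_wshift_iff[of w C m] assms(1,3) by (metis less_irrefl divide_eq_0_iff)
qed

section \<open>The example\<close>

text \<open>The weight a_(n+1) = sqrt ((n+2)/(n+1)) of the paper, at the shifted index n.\<close>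
definition a_weight :: "nat \<Rightarrow> real" where
  "a_weight n = sqrt ((real n + 2) / (real n + 1))"

lemma a_weight_sq: "(a_weight n)\<^sup>2 = (real (Suc n) + 1) / (real n + 1)"
  by (simp add: a_weight_def add.commute)

lemma one_le_a_weight: "1 \<le> a_weight n"
  by (simp add: a_weight_def)

lemma a_weight_le_2: "a_weight n \<le> 2"
proof -
  have "(real n + 2) / (real n + 1) \<le> 4" by (simp add: field_simps)
  then show ?thesis unfolding a_weight_def using real_sqrt_le_mono[of _ 4] by simp
qed

lemma weighted_geometric_mean_le:
  fixes x y C l :: real
  assumes "0 \<le> x" "x \<le> C" "0 \<le> y" "y \<le> C" "0 \<le> l" "l \<le> 1"
  shows "\<bar>x powr (1 - l) * y powr l\<bar> \<le> C"
proof -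
  have "x powr (1 - l) * y powr l \<le> C powr (1 - l) * C powr l"
    using assms by (intro mult_mono powr_mono2) auto
  also have "\<dots> \<le> C"
    using assms by (cases "C = 0") (simp_all add: powr_add[symmetric])
  finally show ?thesis by simp
qed

definition aluthge_moment :: "real \<Rightarrow> nat \<Rightarrow> real" where
  "aluthge_moment l n = (real n + 1) powr (1 - l) * (real n + 2) powr l"

lemma aluthge_moment_pos: "0 < aluthge_moment l n"
  by (simp add: aluthge_moment_def)

lemma aluthge_a_weight_sq:
  "(a_weight n powr (1 - l) * a_weight (Suc n) powr l)\<^sup>2
     = aluthge_moment l (Suc n) / aluthge_moment l n"
proof -
  have sq: "(x powr a)\<^sup>2 = (x\<^sup>2) powr a" for x a :: real
    by (simp add: power2_eq_square powr_mult)
  have "(a_weight n powr (1 - l) * a_weight (Suc n) powr l)\<^sup>2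
      = ((real n + 2) / (real n + 1)) powr (1 - l) * ((real n + 3) / (real n + 2)) powr l"
    by (simp add: power_mult_distrib sq a_weight_def add.commute)
  also have "\<dots> = (real n + 2) powr (1 - l) * (real n + 3) powr l
                  / ((real n + 1) powr (1 - l) * (real n + 2) powr l)"
    by (simp add: powr_divide)
  also have "\<dots> = aluthge_moment l (Suc n) / aluthge_moment l n"
    by (simp add: aluthge_moment_def add.commute)
  finally show ?thesis .
qed

text \<open>First-order expansion: (n+1) ((n+2)/(n+1)) powr l = (n+1) (1 + l/(n+1) + O(1/n^2)).\<close>
lemma aluthge_moment_minus_affine_tendsto_0:
  "(\<lambda>n. aluthge_moment l n - (real n + 1 + l)) \<longlonglongrightarrow> 0"
proof -
  have "DERIV (\<lambda>t. (1 + t) powr l) 0 :> (1 + 0) powr l * (0 * ln (1 + 0) + 1 * l / (1 + 0))"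
    by (rule DERIV_powr) (auto intro!: derivative_eq_intros)
  then have quot: "((\<lambda>t. ((1 + t) powr l - 1) / t) \<longlongrightarrow> l) (at 0)"
    unfolding DERIV_def by simp
  have "filterlim (\<lambda>n. 1 / (real n + 1)) (at 0) sequentially"
    using LIMSEQ_Suc[OF lim_1_over_n] by (intro filterlim_atI) (simp_all add: add.commute)
  from filterlim_compose[OF quot this]
  have "(\<lambda>n. ((1 + 1 / (real n + 1)) powr l - 1) / (1 / (real n + 1))) \<longlonglongrightarrow> l" .
  moreover have "((1 + 1 / (real n + 1)) powr l - 1) / (1 / (real n + 1))
      = aluthge_moment l n - (real n + 1 + l) + l" for n
  proof -
    have "1 + 1 / (real n + 1) = (real n + 2) / (real n + 1)" by (simp add: field_simps)
    moreover have "aluthge_moment l n = (real n + 1) * ((real n + 2) / (real n + 1)) powr l"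
      by (simp add: aluthge_moment_def powr_diff powr_divide)
    ultimately show ?thesis by (simp add: field_simps)
  qed
  ultimately have "(\<lambda>n. aluthge_moment l n - (real n + 1 + l) + l) \<longlonglongrightarrow> l"
    by simp
  from tendsto_diff[OF this tendsto_const[of l]] show ?thesis by (simp add: algebra_simps)
qed

lemma aluthge_moment_not_affine:
  assumes "0 < l" "l < 1" shows "\<exists>n. aluthge_moment l n \<noteq> real n + 1 + l"
proof (rule ccontr)
  assume "\<not> ?thesis"
  then have affine: "aluthge_moment l n = real n + 1 + l" for n by simp
  define A B where "A = (2::real) powr l" and "B = (3::real) powr l"
  have A: "0 < A" and B: "0 < B" by (simp_all add: A_def B_def)
  have "aluthge_moment l 0 = A" by (simp add: aluthge_moment_def A_def)
  then have e0: "A = 1 + l" using affine[of 0] by simp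
  have "2 powr (1 - l) = 2 / A" by (simp add: A_def powr_diff)
  then have "aluthge_moment l 1 = 2 * B / A" by (simp add: aluthge_moment_def B_def)
  then have e1: "2 * B = (2 + l) * A" using affine[of 1] A by (simp add: field_simps)
  have "3 powr (1 - l) = 3 / B" by (simp add: B_def powr_diff)
  moreover have "(4::real) powr l = A * A" unfolding A_def by (simp add: powr_mult[symmetric])
  ultimately have "aluthge_moment l 2 = 3 * A * A / B" by (simp add: aluthge_moment_def)
  then have e2: "3 * A * A = (3 + l) * B" using affine[of 2] B by (simp add: field_simps)
  have "A * (6 * A) = (3 + l) * (2 * B)" using e2 by (simp add: algebra_simps)
  also have "\<dots> = A * ((3 + l) * (2 + l))" using e1 by simp
  finally have "6 * A = (3 + l) * (2 + l)" using A by simp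
  then have "l * (l - 1) = 0" using e0 by (simp add: algebra_simps)
  then show False using assms by simp
qed

lemma aluthge_moment_not_alt_diff_0:
  assumes "0 < l" "l < 1" "2 \<le> m" shows "\<exists>j. alt_diff m (aluthge_moment l) j \<noteq> 0"
proof (rule ccontr)
  assume "\<not> ?thesis"
  then have zero: "alt_diff m (aluthge_moment l) j = 0" for j by simp
  obtain m' where m': "m = Suc (Suc m')" using assms(3) by (metis add_2_eq_Suc le_Suc_ex)
  define h where "h n = aluthge_moment l n - (1 * real n + (1 + l))" for n
  have "alt_diff m h j = 0" for j
    using zero alt_diff_affine[of m' 1 "1 + l" j]
    unfolding h_def alt_diff_diff m' by simp
  moreover have "h \<longlonglongrightarrow> 0"
    using aluthge_moment_minus_affine_tendsto_0[of l] by (simp add: h_def[abs_def] algebra_simps)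
  ultimately have "h n = 0" for n by (rule alt_diff_eq_0_tendsto_0)
  then show False
    using aluthge_moment_not_affine[OF assms(1,2)] by (simp add: h_def algebra_simps)
qed

theorem mainTheorem9:
  shows "\<exists>T. is_bop T \<and> m_isometry 2 T \<and>
           (\<forall>l::real. 0 < l \<and> l < 1 \<longrightarrow>
              (\<forall>m::nat. m \<ge> 2 \<longrightarrow> \<not> m_isometry m (aluthge l T)))"
proof (intro exI conjI allI impI)
  have bounded: "\<bar>a_weight n\<bar> \<le> 2" for n
    using one_le_a_weight[of n] a_weight_le_2[of n] by simp
  show "is_bop (wshift a_weight)"
    using is_bop_wshift bounded by blast
  have "alt_diff 2 (\<lambda>n. 1 * real n + 1) j = 0" for j
    using alt_diff_affine[of 0 1 1 j] by (simp add: numeral_2_eq_2)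
  then show "m_isometry 2 (wshift a_weight)"
    using m_isometry_wshift_iff_moments[of a_weight 2 "\<lambda>n. real n + 1"] bounded a_weight_sq
    by simp
  fix l :: real and m :: nat
  assume l: "0 < l \<and> l < 1" and m: "2 \<le> m"
  have "aluthge l (wshift a_weight) = wshift (\<lambda>n. a_weight n powr (1 - l) * a_weight (Suc n) powr l)"
    using l by (intro aluthge_wshift[of _ 1 _ 2] one_le_a_weight a_weight_le_2) auto
  moreover have "m_isometry m (wshift (\<lambda>n. a_weight n powr (1 - l) * a_weight (Suc n) powr l))
      \<longleftrightarrow> (\<forall>j. alt_diff m (aluthge_moment l) j = 0)"
  proof (rule m_isometry_wshift_iff_moments[of _ 2])
    fix n
    show "\<bar>a_weight n powr (1 - l) * a_weight (Suc n) powr l\<bar> \<le> 2"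
      using weighted_geometric_mean_le[of "a_weight n" 2 "a_weight (Suc n)" l] l
        one_le_a_weight[of n] one_le_a_weight[of "Suc n"] a_weight_le_2 by simp
  qed (simp_all add: aluthge_a_weight_sq aluthge_moment_pos)
  ultimately show "\<not> m_isometry m (aluthge l (wshift a_weight))"
    using aluthge_moment_not_alt_diff_0[of l m] l m by simp
qed

end
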